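(* Let $G$ be a finite group. Then every self-homotopy equivalence of the quasi-schemoid $\widetilde{S}(\imath G)=(\widetilde{\imath G},\{\mathcal{G}_s\}_{s\in G})$ is an isomorphism.
   Context: For a groupoid $\mathcal{H}$, the quasi-schemoid $\widetilde{S}(\mathcal{H})=(\widetilde{\mathcal{H}},S)$ has $ob(\widetilde{\mathcal{H}})=mor(\mathcal{H})$, $\mathrm{Hom}_{\widetilde{\mathcal{H}}}(g,h)=\{(h,g)\}$ if $t(h)=t(g)$ and empty otherwise (composition $(k,h)\circ(h,g)=(k,g)$), and partition $S=\{\mathcal{G}_f\}_{f\in mor(\mathcal{H})}$ with $\mathcal{G}_f=\{(k,l)\mid k^{-1}l=f\}$. For a group $G$, $\imath G$ is $G$ regarded as a groupoid with one object; thus objects of $\widetilde{\imath G}$ are elements of $G$, there is exactly one morphism $(h,g)\colon g\to h$ for all $g,h$, and $\mathcal{G}_s=\{(k,l)\mid k^{-1}l=s\}$. A morphism of quasi-schemoids is a functor sending each block of the source partition into some block of the target partition. Product: $(\mathcal{C},S)\times(\mathcal{E},S')=(\mathcal{C}\times\mathcal{E},\{\sigma\times\tau\})$. $[1]$ has objects $0,1$ and one non-identity morphism $0\to1$; $I=([1],\{\{f\}\}_{f})$. A homotopy $H\colon F\Rightarrow G$ is a morphism $H\colon(\mathcal{C},S)\times I\to(\mathcal{D},S')$ with $H\circ\varepsilon_0=F$, $H\circ\varepsilon_1=G$ ($\varepsilon_i(a)=(a,i)$, $\varepsilon_i(f)=(f,1_i)$). $F\sim G$ means there is a homotopy $F\Rightarrow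 G$ or $G\Rightarrow F$; $F\simeq G$ means a finite chain $F=F_0\sim\cdots\sim F_n=G$. A self-homotopy equivalence of $A$ is a morphism $F\colon A\to A$ for which there is $G'\colon A\to A$ with $FG'\simeq1$ and $G'F\simeq1$. *)

theory Defs
  imports "HOL-Algebra.Group"
begin

text \<open>A (small) category equipped with a partition of its morphisms (quasi-schemoid data).
  cmp g f denotes the composite g o f (defined when tgt f = src g).\<close>
record ('o, 'm) qsch =
  obs :: "'o set"
  mors :: "'m set"
  src :: "'m \<Rightarrow> 'o"
  tgt :: "'m \<Rightarrow> 'o"
  cmp :: "'m \<Rightarrow> 'm \<Rightarrow> 'm"
  idm :: "'o \<Rightarrow> 'm"
  blocks :: "'m set set"

type_synonym ('o1, 'm1, 'o2, 'm2) qfun = "('o1 \<Rightarrow> 'o2) \<times> ('m1 \<Rightarrow> 'm2)"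

definition is_functor :: "('o1,'m1) qsch \<Rightarrow> ('o2,'m2) qsch \<Rightarrow> ('o1,'m1,'o2,'m2) qfun \<Rightarrow> bool" where
  "is_functor C D F \<longleftrightarrow>
     (\<forall>a\<in>obs C. fst F a \<in> obs D) \<and>
     (\<forall>f\<in>mors C. snd F f \<in> mors D \<and> src D (snd F f) = fst F (src C f)
                   \<and> tgt D (snd F f) = fst F (tgt C f)) \<and>
     (\<forall>f\<in>mors C. \<forall>g\<in>mors C. tgt C f = src C g \<longrightarrow>
                   snd F (cmp C g f) = cmp D (snd F g) (snd F f)) \<and>
     (\<forall>a\<in>obs C. snd F (idm C a) = idm D (fst F a))"

definition qs_morph :: "('o1,'m1) qsch \<Rightarrow> ('o2,'m2) qsch \<Rightarrow> ('o1,'m1,'o2,'m2) qfun \<Rightarrow> bool" where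
  "qs_morph C D F \<longleftrightarrow> is_functor C D F \<and> (\<forall>\<sigma>\<in>blocks C. \<exists>\<tau>\<in>blocks D. snd F ` \<sigma> \<subseteq> \<tau>)"

definition qf_comp :: "('o2,'m2,'o3,'m3) qfun \<Rightarrow> ('o1,'m1,'o2,'m2) qfun \<Rightarrow> ('o1,'m1,'o3,'m3) qfun" where
  "qf_comp G F = (fst G \<circ> fst F, snd G \<circ> snd F)"

definition qf_id :: "('o,'m,'o,'m) qfun" where
  "qf_id = (id, id)"

definition qf_eq :: "('o1,'m1) qsch \<Rightarrow> ('o1,'m1,'o2,'m2) qfun \<Rightarrow> ('o1,'m1,'o2,'m2) qfun \<Rightarrow> bool" where
  "qf_eq C F G \<longleftrightarrow> (\<forall>a\<in>obs C. fst F a = fst G a) \<and> (\<forall>f\<in>mors C. snd F f = snd G f)"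

definition qs_prod :: "('o1,'m1) qsch \<Rightarrow> ('o2,'m2) qsch \<Rightarrow> ('o1 \<times> 'o2, 'm1 \<times> 'm2) qsch" where
  "qs_prod C E = \<lparr> obs = obs C \<times> obs E, mors = mors C \<times> mors E,
     src = (\<lambda>(f,g). (src C f, src E g)), tgt = (\<lambda>(f,g). (tgt C f, tgt E g)),
     cmp = (\<lambda>(f,g) (f',g'). (cmp C f f', cmp E g g')),
     idm = (\<lambda>(a,b). (idm C a, idm E b)),
     blocks = {\<sigma> \<times> \<tau> | \<sigma> \<tau>. \<sigma> \<in> blocks C \<and> \<tau> \<in> blocks E} \<rparr>"

text \<open>The interval I: category [1] (objects 0,1; morphisms (i,j) : i -> j with i \<le> j),
  with the discrete partition into singletons.\<close>
definition qs_I :: "(nat, nat \<times> nat) qsch" where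
  "qs_I = \<lparr> obs = {0, 1}, mors = {(0,0), (1,1), (0,1)},
     src = fst, tgt = snd, cmp = (\<lambda>(j,k) (i,j'). (i,k)), idm = (\<lambda>i. (i,i)),
     blocks = {{f} | f. f \<in> {(0::nat,0::nat), (1,1), (0,1)}} \<rparr>"

definition qs_eps :: "nat \<Rightarrow> ('o, 'm, 'o \<times> nat, 'm \<times> (nat \<times> nat)) qfun" where
  "qs_eps i = ((\<lambda>a. (a, i)), (\<lambda>f. (f, (i, i))))"

definition qs_homotopy :: "('o1,'m1) qsch \<Rightarrow> ('o2,'m2) qsch \<Rightarrow> ('o1,'m1,'o2,'m2) qfun \<Rightarrow> ('o1,'m1,'o2,'m2) qfun \<Rightarrow> bool" where
  "qs_homotopy C D F G \<longleftrightarrow> qs_morph C D F \<and> qs_morph C D G \<and>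
     (\<exists>H. qs_morph (qs_prod C qs_I) D H \<and>
          qf_eq C (qf_comp H (qs_eps 0)) F \<and> qf_eq C (qf_comp H (qs_eps 1)) G)"

definition qs_sim :: "('o1,'m1) qsch \<Rightarrow> ('o2,'m2) qsch \<Rightarrow> ('o1,'m1,'o2,'m2) qfun \<Rightarrow> ('o1,'m1,'o2,'m2) qfun \<Rightarrow> bool" where
  "qs_sim C D F G \<longleftrightarrow> qs_homotopy C D F G \<or> qs_homotopy C D G F"

definition qs_htpc :: "('o1,'m1) qsch \<Rightarrow> ('o2,'m2) qsch \<Rightarrow> ('o1,'m1,'o2,'m2) qfun \<Rightarrow> ('o1,'m1,'o2,'m2) qfun \<Rightarrow> bool" where
  "qs_htpc C D F G \<longleftrightarrow> (qs_sim C D)\<^sup>*\<^sup>* F G"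

definition self_htpy_equiv :: "('o,'m) qsch \<Rightarrow> ('o,'m,'o,'m) qfun \<Rightarrow> bool" where
  "self_htpy_equiv A F \<longleftrightarrow> qs_morph A A F \<and>
     (\<exists>G'. qs_morph A A G' \<and> qs_htpc A A (qf_comp F G') qf_id \<and> qs_htpc A A (qf_comp G' F) qf_id)"

definition qs_iso :: "('o1,'m1) qsch \<Rightarrow> ('o2,'m2) qsch \<Rightarrow> ('o1,'m1,'o2,'m2) qfun \<Rightarrow> bool" where
  "qs_iso C D F \<longleftrightarrow> qs_morph C D F \<and>
     (\<exists>G. qs_morph D C G \<and> qf_eq C (qf_comp G F) qf_id \<and> qf_eq D (qf_comp F G) qf_id)"

text \<open>The quasi-schemoid S~(iG) of a group G: objects are the elements of G, the unique
  morphism g -> h is (h,g), and blocks G_s = {(k,l) | k^-1 l = s} for s in G.\<close>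
definition tilde_S_grp :: "('g, 'b) monoid_scheme \<Rightarrow> ('g, 'g \<times> 'g) qsch" where
  "tilde_S_grp G = \<lparr> obs = carrier G, mors = carrier G \<times> carrier G,
     src = snd, tgt = fst, cmp = (\<lambda>(k,h') (h,g). (k,g)), idm = (\<lambda>g. (g,g)),
     blocks = (\<lambda>s. {(k,l). k \<in> carrier G \<and> l \<in> carrier G \<and> inv\<^bsub>G\<^esub> k \<otimes>\<^bsub>G\<^esub> l = s}) ` carrier G \<rparr>"

end

theory Submission
  imports Defs
begin

text \<open>A morphism of \<open>S~(iG)\<close> is determined by its object map \<open>f\<close>, and preserving blocks means
  that \<open>f a\<inverse> f b\<close> depends only on \<open>a\<inverse> b\<close>. A homotopy \<open>H\<close> sends all the morphisms
  \<open>((x,x),0\<rightarrow>1)\<close>, which form one block, into one block \<open>\<G>\<^sub>t\<close>; hence homotopic morphisms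
  differ by the right translation by \<open>t\<close>, and so does everything homotopic to the identity.
  A self-homotopy equivalence \<open>F\<close> therefore has \<open>F G' = (\<cdot> c)\<close> and \<open>G' F = (\<cdot> d)\<close> on objects,
  so its object map is a bijection. Conversely, a bijective object map reflects the relation
  \<open>a\<inverse> b = a'\<inverse> b'\<close> (it determines \<open>f(a\<inverse> b)\<close> via \<open>f 1\<close>), so its inverse again
  preserves blocks and gives the inverse isomorphism.\<close>

definition grp_block :: "('g, 'b) monoid_scheme \<Rightarrow> 'g \<Rightarrow> ('g \<times> 'g) set" where
  "grp_block G s = {(k,l). k \<in> carrier G \<and> l \<in> carrier G \<and> inv\<^bsub>G\<^esub> k \<otimes>\<^bsub>G\<^esub> l = s}"

definition induced_qfun :: "('o \<Rightarrow> 'p) \<Rightarrow> ('o, 'o \<times> 'o, 'p, 'p \<times> 'p) qfun" where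
  "induced_qfun f = (f, \<lambda>(h,k). (f h, f k))"

lemma tilde_S_grp_simps [simp]:
  "obs (tilde_S_grp G) = carrier G" "mors (tilde_S_grp G) = carrier G \<times> carrier G"
  "src (tilde_S_grp G) = snd" "tgt (tilde_S_grp G) = fst"
  "cmp (tilde_S_grp G) = (\<lambda>(k,h') (h,g). (k,g))" "idm (tilde_S_grp G) = (\<lambda>g. (g,g))"
  "blocks (tilde_S_grp G) = grp_block G ` carrier G"
  by (simp_all add: tilde_S_grp_def grp_block_def[abs_def])

lemma qs_morph_tilde_S_grpD:
  assumes "qs_morph (tilde_S_grp G) (tilde_S_grp G) F"
  shows "fst F ` carrier G \<subseteq> carrier G"
    and "qf_eq (tilde_S_grp G) F (induced_qfun (fst F))"
proof -
  have F: "is_functor (tilde_S_grp G) (tilde_S_grp G) F"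
    using assms by (simp add: qs_morph_def)
  then show "fst F ` carrier G \<subseteq> carrier G"
    by (auto simp: is_functor_def)
  have "snd F (h,k) = (fst F h, fst F k)" if "h \<in> carrier G" "k \<in> carrier G" for h k
    using F that unfolding is_functor_def by (simp add: prod_eq_iff)
  then show "qf_eq (tilde_S_grp G) F (induced_qfun (fst F))"
    by (auto simp: qf_eq_def induced_qfun_def)
qed

context group
begin

lemma qs_morph_tilde_S_grp_left_quot:
  assumes F: "qs_morph (tilde_S_grp G) (tilde_S_grp G) F"
    and ab: "a \<in> carrier G" "b \<in> carrier G" "a' \<in> carrier G" "b' \<in> carrier G"
    and eq: "inv a \<otimes> b = inv a' \<otimes> b'"
  shows "inv (fst F a) \<otimes> fst F b = inv (fst F a') \<otimes> fst F b'"
proof -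
  obtain t where "snd F ` grp_block G (inv a \<otimes> b) \<subseteq> grp_block G t"
    using F ab unfolding qs_morph_def tilde_S_grp_simps by blast
  moreover have "(a,b) \<in> grp_block G (inv a \<otimes> b)" "(a',b') \<in> grp_block G (inv a \<otimes> b)"
    using ab eq by (auto simp: grp_block_def)
  ultimately have "snd F (a,b) \<in> grp_block G t" "snd F (a',b') \<in> grp_block G t"
    by auto
  then show ?thesis
    using qs_morph_tilde_S_grpD(2)[OF F] ab
    by (auto simp: grp_block_def qf_eq_def induced_qfun_def)
qed

lemma left_quot_reflect:
  assumes inj: "inj_on f (carrier G)" and f: "f ` carrier G \<subseteq> carrier G"
    and pres: "\<And>a b a' b'. \<lbrakk>a \<in> carrier G; b \<in> carrier G; a' \<in> carrier G; b' \<in> carrier G;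
                 inv a \<otimes> b = inv a' \<otimes> b'\<rbrakk> \<Longrightarrow> inv (f a) \<otimes> f b = inv (f a') \<otimes> f b'"
    and ab: "a \<in> carrier G" "b \<in> carrier G" "a' \<in> carrier G" "b' \<in> carrier G"
    and eq: "inv (f a) \<otimes> f b = inv (f a') \<otimes> f b'"
  shows "inv a \<otimes> b = inv a' \<otimes> b'"
proof -
  \<comment> \<open>\<open>(\<one>, a\<inverse> b)\<close> lies in the same block as \<open>(a, b)\<close>\<close>
  have "inv (f \<one>) \<otimes> f (inv a \<otimes> b) = inv (f a) \<otimes> f b"
       "inv (f \<one>) \<otimes> f (inv a' \<otimes> b') = inv (f a') \<otimes> f b'"
    by (rule pres; use ab in simp)+
  with eq have "inv (f \<one>) \<otimes> f (inv a \<otimes> b) = inv (f \<one>) \<otimes> f (inv a' \<otimes> b')"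
    by simp
  then have "f (inv a \<otimes> b) = f (inv a' \<otimes> b')"
    using f ab by (simp add: image_subset_iff)
  then show ?thesis
    using inj ab by (simp add: inj_on_eq_iff)
qed

lemma qs_morph_tilde_S_grp_induced:
  assumes f: "f ` carrier G \<subseteq> carrier G"
    and pres: "\<And>a b a' b'. \<lbrakk>a \<in> carrier G; b \<in> carrier G; a' \<in> carrier G; b' \<in> carrier G;
                 inv a \<otimes> b = inv a' \<otimes> b'\<rbrakk> \<Longrightarrow> inv (f a) \<otimes> f b = inv (f a') \<otimes> f b'"
  shows "qs_morph (tilde_S_grp G) (tilde_S_grp G) (induced_qfun f)"
proof -
  have "is_functor (tilde_S_grp G) (tilde_S_grp G) (induced_qfun f)"
    using f by (auto simp: is_functor_def induced_qfun_def)
  moreover have "snd (induced_qfun f) ` grp_block G s \<subseteq> grp_block G (inv (f \<one>) \<otimes> f s)"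
    if s: "s \<in> carrier G" for s
  proof (clarsimp simp: grp_block_def induced_qfun_def)
    fix k l assume kl: "k \<in> carrier G" "l \<in> carrier G" "s = inv k \<otimes> l"
    have "inv (f k) \<otimes> f l = inv (f \<one>) \<otimes> f (inv k \<otimes> l)"
      by (rule pres; use kl in simp)
    with kl f show "f k \<in> carrier G \<and> f l \<in> carrier G \<and> inv (f k) \<otimes> f l = inv (f \<one>) \<otimes> f (inv k \<otimes> l)"
      by auto
  qed
  moreover have "inv (f \<one>) \<otimes> f s \<in> carrier G" if "s \<in> carrier G" for s
    using that f by (simp add: image_subset_iff)
  ultimately show ?thesis
    unfolding qs_morph_def tilde_S_grp_simps by blast
qed

lemma qs_homotopy_tilde_S_grp_right_translation:
  assumes "qs_homotopy (tilde_S_grp G) (tilde_S_grp G) F F'"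
  obtains t where "t \<in> carrier G" and "\<And>x. x \<in> carrier G \<Longrightarrow> fst F x = fst F' x \<otimes> t"
proof -
  let ?C = "tilde_S_grp G" and ?CI = "qs_prod (tilde_S_grp G) qs_I"
  obtain H where H: "qs_morph ?CI ?C H"
    and H0: "qf_eq ?C (qf_comp H (qs_eps 0)) F" and H1: "qf_eq ?C (qf_comp H (qs_eps 1)) F'"
    using assms unfolding qs_homotopy_def by blast
  have "grp_block G \<one> \<times> {(0,1)} \<in> blocks ?CI"
    by (auto simp: qs_prod_def qs_I_def)
  then obtain t where t: "t \<in> carrier G" and sub: "snd H ` (grp_block G \<one> \<times> {(0,1)}) \<subseteq> grp_block G t"
    using H unfolding qs_morph_def by auto
  have "fst F x = fst F' x \<otimes> t" if x: "x \<in> carrier G" for x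
  proof -
    let ?m = "((x,x),(0::nat,1::nat))"
    have "?m \<in> mors ?CI"
      using x by (simp add: qs_prod_def qs_I_def)
    then have "src ?C (snd H ?m) = fst H (src ?CI ?m)" "tgt ?C (snd H ?m) = fst H (tgt ?CI ?m)"
      using H unfolding qs_morph_def is_functor_def by blast+
    then have "snd (snd H ?m) = fst H (x,0)" "fst (snd H ?m) = fst H (x,1)"
      by (simp_all add: qs_prod_def qs_I_def)
    moreover have "fst H (x,0) = fst F x" "fst H (x,1) = fst F' x"
      using H0 H1 x by (auto simp: qf_eq_def qf_comp_def qs_eps_def)
    moreover have "?m \<in> grp_block G \<one> \<times> {(0,1)}"
      using x by (simp add: grp_block_def)
    ultimately have "(fst F' x, fst F x) \<in> grp_block G t"
      using sub by (metis image_subset_iff prod.collapse)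
    then show ?thesis
      by (auto simp: grp_block_def m_assoc[symmetric])
  qed
  with t that show thesis by blast
qed

lemma qs_htpc_id_tilde_S_grp_right_translation:
  assumes "qs_htpc (tilde_S_grp G) (tilde_S_grp G) P qf_id"
  obtains c where "c \<in> carrier G" and "\<And>x. x \<in> carrier G \<Longrightarrow> fst P x = x \<otimes> c"
proof -
  have "(qs_sim (tilde_S_grp G) (tilde_S_grp G))\<^sup>*\<^sup>* P qf_id"
    using assms by (simp add: qs_htpc_def)
  then have "\<exists>c\<in>carrier G. \<forall>x\<in>carrier G. fst P x = x \<otimes> c"
  proof (induction rule: converse_rtranclp_induct)
    case base
    show ?case by (auto simp: qf_id_def intro: bexI[of _ \<one>])
  next
    case (step P P')
    then obtain c where c: "c \<in> carrier G" and P': "\<And>x. x \<in> carrier G \<Longrightarrow> fst P' x = x \<otimes> c"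
      by blast
    from step.hyps(1) consider "qs_homotopy (tilde_S_grp G) (tilde_S_grp G) P P'"
      | "qs_homotopy (tilde_S_grp G) (tilde_S_grp G) P' P"
      unfolding qs_sim_def by blast
    then show ?case
    proof cases
      case 1
      obtain d where "d \<in> carrier G" "\<And>x. x \<in> carrier G \<Longrightarrow> fst P x = fst P' x \<otimes> d"
        using qs_homotopy_tilde_S_grp_right_translation[OF 1] by blast
      with c P' show ?thesis
        by (auto simp: m_assoc intro!: bexI[of _ "c \<otimes> d"])
    next
      case 2
      obtain d where d: "d \<in> carrier G" and P: "\<And>x. x \<in> carrier G \<Longrightarrow> fst P' x = fst P x \<otimes> d"
        using qs_homotopy_tilde_S_grp_right_translation[OF 2] by blast
      have Pcar: "fst P ` carrier G \<subseteq> carrier G"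
        using 2 qs_morph_tilde_S_grpD(1) unfolding qs_homotopy_def by blast
      have "fst P x = x \<otimes> (c \<otimes> inv d)" if x: "x \<in> carrier G" for x
      proof -
        have "fst P x = fst P x \<otimes> d \<otimes> inv d"
          using Pcar x d by (simp add: image_subset_iff m_assoc)
        also have "\<dots> = x \<otimes> c \<otimes> inv d"
          using P[OF x] P'[OF x] by simp
        also have "\<dots> = x \<otimes> (c \<otimes> inv d)"
          using x c d by (simp add: m_assoc)
        finally show ?thesis .
      qed
      with c d show ?thesis by blast
    qed
  qed
  with that show thesis by blast
qed

lemma self_htpy_equiv_tilde_S_grp_bij:
  assumes "self_htpy_equiv (tilde_S_grp G) F"
  shows "bij_betw (fst F) (carrier G) (carrier G)"
proof -
  obtain G' where F: "qs_morph (tilde_S_grp G) (tilde_S_grp G) F"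
    and G': "qs_morph (tilde_S_grp G) (tilde_S_grp G) G'"
    and FG': "qs_htpc (tilde_S_grp G) (tilde_S_grp G) (qf_comp F G') qf_id"
    and G'F: "qs_htpc (tilde_S_grp G) (tilde_S_grp G) (qf_comp G' F) qf_id"
    using assms unfolding self_htpy_equiv_def by blast
  obtain c where c: "c \<in> carrier G" and Fg: "\<And>x. x \<in> carrier G \<Longrightarrow> fst F (fst G' x) = x \<otimes> c"
    using qs_htpc_id_tilde_S_grp_right_translation[OF FG'] by (auto simp: qf_comp_def)
  obtain d where d: "d \<in> carrier G" and gF: "\<And>x. x \<in> carrier G \<Longrightarrow> fst G' (fst F x) = x \<otimes> d"
    using qs_htpc_id_tilde_S_grp_right_translation[OF G'F] by (auto simp: qf_comp_def)
  have "inj_on (fst F) (carrier G)"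
    by (rule inj_onI) (metis gF d right_cancel)
  moreover have "y \<in> fst F ` carrier G" if y: "y \<in> carrier G" for y
  proof -
    have "fst F (fst G' (y \<otimes> inv c)) = y"
      using Fg[of "y \<otimes> inv c"] y c by (simp add: m_assoc)
    moreover have "fst G' (y \<otimes> inv c) \<in> carrier G"
      using qs_morph_tilde_S_grpD(1)[OF G'] y c by (simp add: image_subset_iff)
    ultimately show ?thesis
      by (metis image_eqI)
  qed
  ultimately show ?thesis
    using qs_morph_tilde_S_grpD(1)[OF F] by (auto simp: bij_betw_def)
qed

lemma qs_iso_tilde_S_grpI:
  assumes F: "qs_morph (tilde_S_grp G) (tilde_S_grp G) F"
    and bij: "bij_betw (fst F) (carrier G) (carrier G)"
  shows "qs_iso (tilde_S_grp G) (tilde_S_grp G) F"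
proof -
  define g where "g = the_inv_into (carrier G) (fst F)"
  have inj: "inj_on (fst F) (carrier G)" and Fcar: "fst F ` carrier G = carrier G"
    using bij by (auto simp: bij_betw_def)
  have g: "g ` carrier G \<subseteq> carrier G"
    using bij_betw_the_inv_into[OF bij] by (auto simp: g_def bij_betw_def)
  have Fg: "fst F (g x) = x" if "x \<in> carrier G" for x
    using f_the_inv_into_f[OF inj] Fcar that by (simp add: g_def)
  have gF: "g (fst F x) = x" if "x \<in> carrier G" for x
    using the_inv_into_f_f[OF inj that] by (simp add: g_def)
  have "qs_morph (tilde_S_grp G) (tilde_S_grp G) (induced_qfun g)"
  proof (rule qs_morph_tilde_S_grp_induced[OF g])
    fix a b a' b'
    assume ab: "a \<in> carrier G" "b \<in> carrier G" "a' \<in> carrier G" "b' \<in> carrier G"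
      and "inv a \<otimes> b = inv a' \<otimes> b'"
    then have "inv (fst F (g a)) \<otimes> fst F (g b) = inv (fst F (g a')) \<otimes> fst F (g b')"
      by (simp add: Fg)
    moreover have "g a \<in> carrier G" "g b \<in> carrier G" "g a' \<in> carrier G" "g b' \<in> carrier G"
      using ab g by auto
    ultimately show "inv (g a) \<otimes> g b = inv (g a') \<otimes> g b'"
      using left_quot_reflect[OF inj _ qs_morph_tilde_S_grp_left_quot[OF F]] Fcar by blast
  qed
  moreover have "qf_eq (tilde_S_grp G) (qf_comp (induced_qfun g) F) qf_id"
    using qs_morph_tilde_S_grpD(2)[OF F] gF
    by (auto simp: qf_eq_def qf_comp_def qf_id_def induced_qfun_def)
  moreover have "qf_eq (tilde_S_grp G) (qf_comp F (induced_qfun g)) qf_id"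
    using qs_morph_tilde_S_grpD(2)[OF F] g Fg
    by (auto simp: qf_eq_def qf_comp_def qf_id_def induced_qfun_def image_subset_iff)
  ultimately show ?thesis
    using F unfolding qs_iso_def by blast
qed

end

theorem proposition4p5:
  fixes G :: "('g, 'b) monoid_scheme" and F :: "('g, 'g \<times> 'g, 'g, 'g \<times> 'g) qfun"
  assumes "group G" and "finite (carrier G)"
    and "self_htpy_equiv (tilde_S_grp G) F"
  shows "qs_iso (tilde_S_grp G) (tilde_S_grp G) F"
proof -
  have "qs_morph (tilde_S_grp G) (tilde_S_grp G) F"
    using assms(3) by (simp add: self_htpy_equiv_def)
  moreover have "bij_betw (fst F) (carrier G) (carrier G)"
    using group.self_htpy_equiv_tilde_S_grp_bij[OF assms(1,3)] .
  ultimately show ?thesis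
    by (rule group.qs_iso_tilde_S_grpI[OF assms(1)])
qed

end
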